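(* Under the hypotheses of Theorem 2 (bounds $0\le\nu_i<\mu_i$, $\sum\nu_i\le1\le\sum\mu_i$, $\Phi\in\Lambda$), suppose $\xi^*=\{(\boldsymbol{x}_i,w_i)\}$ is $\Phi$-optimal in $\Xi$ with $\Phi(\xi^* )<\infty$, and let $\mathcal{X}_1=\{\boldsymbol{x}_i:w_i=\nu_i\}$, $\mathcal{X}_3=\{\boldsymbol{x}_i:w_i=\mu_i\}$, $\mathcal{X}_2=\{\boldsymbol{x}_i:\nu_i<w_i<\mu_i\}$. If $\mathcal{X}_2\ne\emptyset$, then $F_\Phi(\xi^*;\boldsymbol{x}_i)$ takes a common value $s$ for all $\boldsymbol{x}_i\in\mathcal{X}_2$, and $$s=\frac{-\sum_{\boldsymbol{x}_i\in\mathcal{X}_1}F_\Phi(\xi^*;\boldsymbol{x}_i)\nu_i-\sum_{\boldsymbol{x}_i\in\mathcal{X}_3}F_\Phi(\xi^*;\boldsymbol{x}_i)\mu_i}{1-\left(\sum_{\boldsymbol{x}_i\in\mathcal{X}_1}\nu_i+\sum_{\boldsymbol{x}_i\in\mathcal{X}_3}\mu_i\right)}.$$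
   Context: Design space $\mathcal{X}=\{\boldsymbol{x}_1,\ldots,\boldsymbol{x}_N\}$; designs $\xi=\{(\boldsymbol{x}_i,w_i)\}$ with $w_i\ge0$, $\sum w_i=1$; $\Xi$ is the set of designs with $\nu_i\le w_i\le\mu_i$. $\Phi(\xi)$ is a criterion of $M(\xi)=\sum_iw_iI_{\boldsymbol\theta}(\boldsymbol{x}_i)$ ($+\infty$ when undefined). $F_\Phi(\xi,\eta)=\lim_{\alpha\downarrow0}[\Phi((1-\alpha)\xi+\alpha\eta)-\Phi(\xi)]/\alpha$ and $F_\Phi(\xi;\boldsymbol{x}_i)=F_\Phi(\xi,\delta_{\boldsymbol{x}_i})$ with $\delta_{\boldsymbol{x}_i}$ the one-point design at $\boldsymbol{x}_i$. $\Lambda$: criteria that are convex in the weights, linearly differentiable ($F_\Phi(\xi,\eta)=\sum_i\lambda_iF_\Phi(\xi;\boldsymbol{x}_i)$ for $\eta=\{(\boldsymbol{x}_i,\lambda_i)\}$ whenever $\Phi(\xi)<\infty$), and infinitely differentiable along line segments of designs. *)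

theory Defs
  imports "HOL-Analysis.Analysis"
begin

text \<open>Design points x_1..x_N are indexed by a finite type 'n; a design is its weight
vector w :: 'n => real. Criterion values live in ereal (+infinity when undefined).\<close>

definition is_design :: "('n::finite \<Rightarrow> real) \<Rightarrow> bool" where
  "is_design w \<longleftrightarrow> (\<forall>i. 0 \<le> w i) \<and> sum w UNIV = 1"

definition Xi :: "('n::finite \<Rightarrow> real) \<Rightarrow> ('n \<Rightarrow> real) \<Rightarrow> ('n \<Rightarrow> real) set" where
  "Xi nu mu = {w. is_design w \<and> (\<forall>i. nu i \<le> w i \<and> w i \<le> mu i)}"

definition info_matrix :: "('n::finite \<Rightarrow> real^'p^'p) \<Rightarrow> ('n \<Rightarrow> real) \<Rightarrow> real^'p^'p" where
  "info_matrix I w = (\<Sum>i\<in>UNIV. w i *\<^sub>R I i)"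

definition crit :: "(real^'p^'p \<Rightarrow> ereal) \<Rightarrow> ('n::finite \<Rightarrow> real^'p^'p) \<Rightarrow> ('n \<Rightarrow> real) \<Rightarrow> ereal" where
  "crit psi I w = psi (info_matrix I w)"

definition mix :: "real \<Rightarrow> ('n \<Rightarrow> real) \<Rightarrow> ('n \<Rightarrow> real) \<Rightarrow> ('n \<Rightarrow> real)" where
  "mix \<alpha> \<xi> \<eta> = (\<lambda>i. (1 - \<alpha>) * \<xi> i + \<alpha> * \<eta> i)"

definition delta :: "'n \<Rightarrow> ('n \<Rightarrow> real)" where
  "delta i = (\<lambda>j. if j = i then 1 else 0)"

definition diff_quot :: "(('n \<Rightarrow> real) \<Rightarrow> ereal) \<Rightarrow> ('n \<Rightarrow> real) \<Rightarrow> ('n \<Rightarrow> real) \<Rightarrow> real \<Rightarrow> ereal" where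
  "diff_quot Phi \<xi> \<eta> \<alpha> = (Phi (mix \<alpha> \<xi> \<eta>) - Phi \<xi>) / ereal \<alpha>"

definition Fdir :: "(('n \<Rightarrow> real) \<Rightarrow> ereal) \<Rightarrow> ('n \<Rightarrow> real) \<Rightarrow> ('n \<Rightarrow> real) \<Rightarrow> ereal" where
  "Fdir Phi \<xi> \<eta> = Lim (at_right 0) (diff_quot Phi \<xi> \<eta>)"

definition Fpt :: "(('n \<Rightarrow> real) \<Rightarrow> ereal) \<Rightarrow> ('n \<Rightarrow> real) \<Rightarrow> 'n \<Rightarrow> ereal" where
  "Fpt Phi \<xi> i = Fdir Phi \<xi> (delta i)"

definition convex_in_weights :: "(('n::finite \<Rightarrow> real) \<Rightarrow> ereal) \<Rightarrow> bool" where
  "convex_in_weights Phi \<longleftrightarrow> (\<forall>\<xi> \<eta> t. is_design \<xi> \<and> is_design \<eta> \<and> 0 \<le> t \<and> t \<le> 1 \<longrightarrow>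
      Phi (mix t \<xi> \<eta>) \<le> ereal (1 - t) * Phi \<xi> + ereal t * Phi \<eta>)"

definition linearly_differentiable :: "(('n::finite \<Rightarrow> real) \<Rightarrow> ereal) \<Rightarrow> bool" where
  "linearly_differentiable Phi \<longleftrightarrow> (\<forall>\<xi> \<eta>. is_design \<xi> \<and> is_design \<eta> \<and> Phi \<xi> < \<infinity> \<longrightarrow>
      (\<exists>l. (diff_quot Phi \<xi> \<eta> \<longlongrightarrow> l) (at_right 0)) \<and>
      Fdir Phi \<xi> \<eta> = (\<Sum>i\<in>UNIV. ereal (\<eta> i) * Fpt Phi \<xi> i))"

definition smooth_on_segments :: "(('n::finite \<Rightarrow> real) \<Rightarrow> ereal) \<Rightarrow> bool" where
  "smooth_on_segments Phi \<longleftrightarrow> (\<forall>\<xi> \<eta>. is_design \<xi> \<and> is_design \<eta> \<and> Phi \<xi> < \<infinity> \<and> Phi \<eta> < \<infinity> \<longrightarrow>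
      (\<exists>D :: nat \<Rightarrow> real \<Rightarrow> real.
         (\<forall>\<alpha>\<in>{0..1}. Phi (mix \<alpha> \<xi> \<eta>) = ereal (D 0 \<alpha>)) \<and>
         (\<forall>n. \<forall>\<alpha>\<in>{0..1}. (D n has_real_derivative D (Suc n) \<alpha>) (at \<alpha> within {0..1}))))"

definition in_Lambda :: "(('n::finite \<Rightarrow> real) \<Rightarrow> ereal) \<Rightarrow> bool" where
  "in_Lambda Phi \<longleftrightarrow> convex_in_weights Phi \<and> linearly_differentiable Phi \<and> smooth_on_segments Phi"

definition optimal_in :: "(('n::finite \<Rightarrow> real) \<Rightarrow> ereal) \<Rightarrow> ('n \<Rightarrow> real) set \<Rightarrow> ('n \<Rightarrow> real) \<Rightarrow> bool" where
  "optimal_in Phi S w \<longleftrightarrow> w \<in> S \<and> (\<forall>\<eta>\<in>S. Phi w \<le> Phi \<eta>)"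

end

theory Submission
  imports Defs
begin

text \<open>At the optimum w the directional derivative towards any design of Xi is nonnegative,
and towards w itself it vanishes, so \<open>\<Sum>\<^sub>i w\<^sub>i F(w;x\<^sub>i) = 0\<close>; in particular \<open>F(w;x\<^sub>i)\<close> is
finite wherever \<open>w\<^sub>i > 0\<close>. Shifting a little mass from one point of \<open>X\<^sub>2\<close> to another stays
in Xi, so by linear differentiability \<open>F(w;\<cdot>)\<close> is constant on \<open>X\<^sub>2\<close>. Splitting the vanishing
sum over \<open>X\<^sub>1, X\<^sub>2, X\<^sub>3\<close>, with \<open>\<Sum>\<^bsub>X\<^sub>2\<^esub> w\<^sub>i = 1 - \<Sum>\<^bsub>X\<^sub>1\<^esub> \<nu>\<^sub>i - \<Sum>\<^bsub>X\<^sub>3\<^esub> \<mu>\<^sub>i > 0\<close>, gives the formula.\<close>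

lemma finite_if_weighted_sum_eq_0:
  fixes F :: "'a \<Rightarrow> ereal"
  assumes "finite A" "(\<Sum>i\<in>A. ereal (c i) * F i) = 0" "i \<in> A" "c i \<noteq> 0"
  shows "\<bar>F i\<bar> \<noteq> \<infinity>"
proof -
  have "\<bar>ereal (c i) * F i\<bar> \<noteq> \<infinity>"
    using assms(1-3) sum_Inf[of "\<lambda>i. ereal (c i) * F i" A] by auto
  with assms(4) show ?thesis
    by (cases "F i") (auto split: if_split_asm)
qed

lemma sum_ereal_times_real_of_ereal:
  fixes F :: "'a \<Rightarrow> ereal"
  assumes "\<And>i. i \<in> A \<Longrightarrow> c i \<noteq> 0 \<Longrightarrow> \<bar>F i\<bar> \<noteq> \<infinity>"
  shows "(\<Sum>i\<in>A. ereal (c i) * F i) = ereal (\<Sum>i\<in>A. c i * real_of_ereal (F i))"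
proof -
  have "ereal (c i) * F i = ereal (c i * real_of_ereal (F i))" if "i \<in> A" for i
    using assms[OF that] by (cases "c i = 0"; cases "F i") (auto simp: zero_ereal_def)
  then show ?thesis
    by simp
qed

lemma mix_self [simp]: "mix a w w = w"
  by (rule ext) (simp add: mix_def algebra_simps)

lemma mix_in_Xi:
  assumes "\<xi> \<in> Xi nu mu" "\<eta> \<in> Xi nu mu" "0 \<le> a" "a \<le> 1"
  shows "mix a \<xi> \<eta> \<in> Xi nu mu"
proof -
  have "sum (mix a \<xi> \<eta>) UNIV = (1 - a) * sum \<xi> UNIV + a * sum \<eta> UNIV"
    by (simp add: mix_def sum.distrib sum_distrib_left)
  then have "sum (mix a \<xi> \<eta>) UNIV = 1"
    using assms(1,2) by (simp add: Xi_def is_design_def)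
  moreover have "mix a \<xi> \<eta> i \<in> {max 0 (nu i)..mu i}" for i
  proof -
    have "\<xi> i \<in> {max 0 (nu i)..mu i}" "\<eta> i \<in> {max 0 (nu i)..mu i}"
      using assms(1,2) by (auto simp: Xi_def is_design_def)
    then have "(1 - a) *\<^sub>R \<xi> i + a *\<^sub>R \<eta> i \<in> {max 0 (nu i)..mu i}"
      using assms(3,4) by (intro convexD) auto
    then show ?thesis
      by (simp add: mix_def)
  qed
  ultimately show ?thesis
    by (simp add: Xi_def is_design_def)
qed

lemma Fdir_self:
  assumes "\<bar>Phi \<xi>\<bar> \<noteq> \<infinity>"
  shows "Fdir Phi \<xi> \<xi> = 0"
proof -
  have "diff_quot Phi \<xi> \<xi> = (\<lambda>a. 0)"
    using assms by (intro ext) (auto simp: diff_quot_def)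
  then show ?thesis
    unfolding Fdir_def by (auto intro: tendsto_Lim)
qed

lemma Fdir_nonneg_at_minimum:
  assumes "optimal_in Phi S w"
    and "\<And>a. 0 < a \<Longrightarrow> a < 1 \<Longrightarrow> mix a w \<eta> \<in> S"
    and "\<bar>Phi w\<bar> \<noteq> \<infinity>"
    and lim: "(diff_quot Phi w \<eta> \<longlongrightarrow> l) (at_right 0)"
  shows "0 \<le> Fdir Phi w \<eta>"
proof -
  have "eventually (\<lambda>a. 0 \<le> diff_quot Phi w \<eta> a) (at_right 0)"
    unfolding eventually_at_right_field
  proof (intro exI[of _ 1] conjI allI impI)
    fix a :: real
    assume a: "0 < a" "a < 1"
    then have "Phi w \<le> Phi (mix a w \<eta>)"
      using assms(1,2) by (auto simp: optimal_in_def)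
    then show "0 \<le> diff_quot Phi w \<eta> a"
      using a assms(3) unfolding diff_quot_def
      by (cases "Phi w"; cases "Phi (mix a w \<eta>)") auto
  qed simp
  then have "0 \<le> l"
    by (intro tendsto_lowerbound[OF lim]) simp_all
  moreover have "Fdir Phi w \<eta> = l"
    unfolding Fdir_def using lim by (intro tendsto_Lim) simp_all
  ultimately show ?thesis
    by simp
qed

lemma sum_Fpt_weights_eq_0:
  assumes "linearly_differentiable Phi" "is_design w" "\<bar>Phi w\<bar> \<noteq> \<infinity>"
  shows "(\<Sum>i\<in>UNIV. ereal (w i) * Fpt Phi w i) = 0"
  using assms Fdir_self[of Phi w] by (auto simp: linearly_differentiable_def)

lemma Fpt_finite_on_support:
  assumes "linearly_differentiable Phi" "is_design w" "\<bar>Phi w\<bar> \<noteq> \<infinity>" "w i \<noteq> 0"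
  shows "\<bar>Fpt Phi w i\<bar> \<noteq> \<infinity>"
  using finite_if_weighted_sum_eq_0[OF _ sum_Fpt_weights_eq_0[OF assms(1-3)]] assms(4) by simp

lemma sum_weights_real_Fpt_eq_0:
  assumes "linearly_differentiable Phi" "is_design w" "\<bar>Phi w\<bar> \<noteq> \<infinity>"
  shows "(\<Sum>i\<in>UNIV. w i * real_of_ereal (Fpt Phi w i)) = 0"
  using sum_Fpt_weights_eq_0[OF assms] Fpt_finite_on_support[OF assms]
    sum_ereal_times_real_of_ereal[of UNIV w "Fpt Phi w"] by (simp add: zero_ereal_def)

lemma sum_Fpt_nonneg_at_optimum:
  assumes "linearly_differentiable Phi"
    and opt: "optimal_in Phi (Xi nu mu) w"
    and "\<bar>Phi w\<bar> \<noteq> \<infinity>"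
    and \<eta>: "\<eta> \<in> Xi nu mu"
  shows "0 \<le> (\<Sum>i\<in>UNIV. ereal (\<eta> i) * Fpt Phi w i)"
proof -
  have w: "w \<in> Xi nu mu"
    using opt by (simp add: optimal_in_def)
  moreover have "Phi w < \<infinity>"
    using assms(3) by auto
  ultimately obtain l where lim: "(diff_quot Phi w \<eta> \<longlongrightarrow> l) (at_right 0)"
    and "Fdir Phi w \<eta> = (\<Sum>i\<in>UNIV. ereal (\<eta> i) * Fpt Phi w i)"
    using assms(1) \<eta> unfolding linearly_differentiable_def Xi_def by blast
  moreover have "0 \<le> Fdir Phi w \<eta>"
    by (rule Fdir_nonneg_at_minimum[OF opt _ assms(3) lim]) (simp add: mix_in_Xi[OF w \<eta>])
  ultimately show ?thesis
    by simp
qed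

definition mass_transfer :: "real \<Rightarrow> 'n \<Rightarrow> 'n \<Rightarrow> ('n \<Rightarrow> real) \<Rightarrow> ('n \<Rightarrow> real)" where
  "mass_transfer t i j w = (\<lambda>k. w k - t * delta i k + t * delta j k)"

lemma sum_delta [simp]: "sum (delta (i :: 'n::finite)) UNIV = 1"
  by (simp add: delta_def)

lemma sum_delta_times [simp]:
  fixes f :: "'n::finite \<Rightarrow> real"
  shows "(\<Sum>k\<in>UNIV. delta i k * f k) = f i"
  by (simp add: delta_def if_distrib[of "\<lambda>x. x * _"] cong: if_cong)

lemma sum_mass_transfer:
  fixes f :: "'n::finite \<Rightarrow> real"
  shows "(\<Sum>k\<in>UNIV. mass_transfer t i j w k * f k) = (\<Sum>k\<in>UNIV. w k * f k) + t * (f j - f i)"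
proof -
  have "(\<Sum>k\<in>UNIV. mass_transfer t i j w k * f k)
      = (\<Sum>k\<in>UNIV. w k * f k) - t * (\<Sum>k\<in>UNIV. delta i k * f k) + t * (\<Sum>k\<in>UNIV. delta j k * f k)"
    by (simp add: mass_transfer_def algebra_simps sum.distrib sum_subtractf sum_distrib_left)
  then show ?thesis
    by (simp add: right_diff_distrib)
qed

lemma mass_transfer_in_Xi:
  assumes "w \<in> Xi nu mu" "\<forall>k. 0 \<le> nu k" "i \<noteq> j" "0 \<le> t" "t \<le> w i - nu i" "t \<le> mu j - w j"
  shows "mass_transfer t i j w \<in> Xi nu mu"
proof -
  have "sum (mass_transfer t i j w) UNIV = sum w UNIV"
    by (simp add: mass_transfer_def sum.distrib sum_subtractf sum_distrib_left[symmetric])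
  moreover have "nu k \<le> mass_transfer t i j w k \<and> mass_transfer t i j w k \<le> mu k" for k
  proof -
    have "nu l \<le> w l \<and> w l \<le> mu l" for l
      using assms(1) by (simp add: Xi_def)
    from this[of i] this[of j] this[of k] show ?thesis
      using assms(3-6) by (auto simp: mass_transfer_def delta_def)
  qed
  ultimately show ?thesis
    using assms(1,2) by (auto simp: Xi_def is_design_def intro: order_trans)
qed

lemma Fpt_le_if_mass_transferable:
  assumes LD: "linearly_differentiable Phi"
    and opt: "optimal_in Phi (Xi nu mu) w"
    and fin: "\<bar>Phi w\<bar> \<noteq> \<infinity>"
    and nu: "\<forall>k. 0 \<le> nu k"
    and i: "nu i < w i" and j: "0 < w j" "w j < mu j"
  shows "Fpt Phi w i \<le> Fpt Phi w j"
proof (cases "i = j")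
  case False
  define F where "F = Fpt Phi w"
  define f where "f = (\<lambda>k. real_of_ereal (F k))"
  define t where "t = min (w i - nu i) (mu j - w j)"
  define \<eta> where "\<eta> = mass_transfer t i j w"
  have w: "w \<in> Xi nu mu" and wd: "is_design w"
    using opt by (auto simp: optimal_in_def Xi_def)
  have "0 < t"
    using i j by (simp add: t_def)
  have supp: "\<bar>F k\<bar> \<noteq> \<infinity>" if "w k \<noteq> 0" for k
    unfolding F_def by (rule Fpt_finite_on_support[OF LD wd fin that])
  have "\<eta> \<in> Xi nu mu"
    unfolding \<eta>_def using \<open>0 < t\<close> by (intro mass_transfer_in_Xi[OF w nu False]) (auto simp: t_def)
  then have "0 \<le> (\<Sum>k\<in>UNIV. ereal (\<eta> k) * F k)"
    unfolding F_def by (rule sum_Fpt_nonneg_at_optimum[OF LD opt fin])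
  also have "\<dots> = ereal (\<Sum>k\<in>UNIV. \<eta> k * f k)"
    unfolding f_def
  proof (rule sum_ereal_times_real_of_ereal)
    fix k assume "\<eta> k \<noteq> 0"
    then have "w k \<noteq> 0"
      using i j nu[rule_format, of i] by (auto simp: \<eta>_def mass_transfer_def delta_def split: if_splits)
    then show "\<bar>F k\<bar> \<noteq> \<infinity>"
      by (rule supp)
  qed
  also have "\<dots> = ereal (t * (f j - f i))"
    using sum_weights_real_Fpt_eq_0[OF LD wd fin]
    by (simp add: \<eta>_def sum_mass_transfer f_def F_def)
  finally have "f i \<le> f j"
    using \<open>0 < t\<close> by (simp add: zero_le_mult_iff)
  moreover have "w i \<noteq> 0"
    using i nu by (metis less_le_not_le)
  ultimately show ?thesis
    using supp[of i] supp[of j] j unfolding f_def F_def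
    by (cases "Fpt Phi w i"; cases "Fpt Phi w j") auto
qed simp

lemma Fpt_eq_on_free_weights:
  assumes "linearly_differentiable Phi" "optimal_in Phi (Xi nu mu) w" "\<bar>Phi w\<bar> \<noteq> \<infinity>"
    and nu: "\<forall>k. 0 \<le> nu k"
    and "i \<in> {k. nu k < w k \<and> w k < mu k}" "j \<in> {k. nu k < w k \<and> w k < mu k}"
  shows "Fpt Phi w i = Fpt Phi w j"
proof -
  have "0 < w i" "0 < w j"
    using assms(5,6) nu by (auto intro: le_less_trans)
  with assms show ?thesis
    by (intro antisym Fpt_le_if_mass_transferable[OF assms(1-4)]) auto
qed

lemma sum_split_by_bounds:
  fixes g :: "'n::finite \<Rightarrow> 'a::comm_monoid_add"
  assumes "\<forall>i. nu i < mu i" "w \<in> Xi nu mu"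
  shows "sum g UNIV = sum g {i. w i = nu i} + sum g {i. nu i < w i \<and> w i < mu i} + sum g {i. w i = mu i}"
    (is "_ = sum g ?S1 + sum g ?S2 + sum g ?S3")
proof -
  have "UNIV = ?S1 \<union> ?S2 \<union> ?S3"
    using assms(2) by (auto simp: Xi_def less_le)
  moreover have "?S1 \<inter> ?S2 = {}" "(?S1 \<union> ?S2) \<inter> ?S3 = {}"
    using assms(1) by (auto dest: less_imp_neq) (metis less_irrefl)
  ultimately show ?thesis
    using sum.union_disjoint[of "?S1 \<union> ?S2" ?S3 g] sum.union_disjoint[of ?S1 ?S2 g] by simp
qed

lemma free_weights_value:
  fixes w nu mu f :: "'n::finite \<Rightarrow> real"
  defines "d \<equiv> 1 - ((\<Sum>i\<in>{i. w i = nu i}. nu i) + (\<Sum>i\<in>{i. w i = mu i}. mu i))"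
  assumes bounds: "\<forall>i. 0 \<le> nu i \<and> nu i < mu i"
    and w: "w \<in> Xi nu mu"
    and balance: "(\<Sum>i\<in>UNIV. w i * f i) = 0"
    and i0: "i0 \<in> {i. nu i < w i \<and> w i < mu i}"
    and const: "\<forall>i\<in>{i. nu i < w i \<and> w i < mu i}. f i = s"
  shows "0 < d"
    and "s = (- (\<Sum>i\<in>{i. w i = nu i}. f i * nu i) - (\<Sum>i\<in>{i. w i = mu i}. f i * mu i)) / d"
proof -
  let ?S1 = "{i. w i = nu i}" and ?S2 = "{i. nu i < w i \<and> w i < mu i}" and ?S3 = "{i. w i = mu i}"
  have split: "sum g UNIV = sum g ?S1 + sum g ?S2 + sum g ?S3" for g :: "'n \<Rightarrow> real"
    using bounds w by (intro sum_split_by_bounds) auto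
  have "d = sum w ?S2"
    using split[of w] w by (simp add: d_def Xi_def is_design_def)
  moreover have "0 < w i0"
    using i0 bounds by (auto intro: le_less_trans)
  moreover have "w i0 \<le> sum w ?S2"
    using i0 bounds by (intro member_le_sum) (auto intro: order_trans less_imp_le)
  ultimately show "0 < d"
    by simp
  have "(\<Sum>i\<in>?S1. f i * nu i) + s * d + (\<Sum>i\<in>?S3. f i * mu i) = 0"
    using split[of "\<lambda>i. w i * f i"] balance const \<open>d = sum w ?S2\<close>
    by (simp add: sum_distrib_left mult.commute)
  with \<open>0 < d\<close> show "s = (- (\<Sum>i\<in>?S1. f i * nu i) - (\<Sum>i\<in>?S3. f i * mu i)) / d"
    by (simp add: field_simps)
qed

theorem mainTheorem3:
  fixes I :: "'n::finite \<Rightarrow> real^'p^'p"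
    and psi :: "real^'p^'p \<Rightarrow> ereal"
    and nu mu w :: "'n \<Rightarrow> real"
  assumes crit_vals: "\<forall>A. psi A \<noteq> -\<infinity>"
    and bounds: "\<forall>i. 0 \<le> nu i \<and> nu i < mu i"
    and sum_nu: "sum nu UNIV \<le> 1"
    and sum_mu: "1 \<le> sum mu UNIV"
    and Lambda: "in_Lambda (crit psi I)"
    and opt: "optimal_in (crit psi I) (Xi nu mu) w"
    and fin: "crit psi I w < \<infinity>"
    and X2_ne: "{i. nu i < w i \<and> w i < mu i} \<noteq> {}"
  shows "\<exists>s::real.
    (\<forall>i\<in>{i. nu i < w i \<and> w i < mu i}. Fpt (crit psi I) w i = ereal s) \<and>
    ereal s = (- (\<Sum>i\<in>{i. w i = nu i}. Fpt (crit psi I) w i * ereal (nu i))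
               - (\<Sum>i\<in>{i. w i = mu i}. Fpt (crit psi I) w i * ereal (mu i)))
              / ereal (1 - ((\<Sum>i\<in>{i. w i = nu i}. nu i) + (\<Sum>i\<in>{i. w i = mu i}. mu i)))"
proof -
  \<comment> \<open>\<open>sum_nu\<close> and \<open>sum_mu\<close> only make Xi nonempty, which \<open>opt\<close> already guarantees.\<close>
  let ?Phi = "crit psi I" and ?X2 = "{i. nu i < w i \<and> w i < mu i}"
  let ?F = "Fpt ?Phi w"
  define f where "f = (\<lambda>i. real_of_ereal (?F i))"
  have LD: "linearly_differentiable ?Phi"
    using Lambda by (simp add: in_Lambda_def)
  have w: "w \<in> Xi nu mu" and wd: "is_design w"
    using opt by (auto simp: optimal_in_def Xi_def)
  have fin': "\<bar>?Phi w\<bar> \<noteq> \<infinity>"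
    using fin crit_vals unfolding crit_def by (cases "psi (info_matrix I w)") auto
  have F_finite: "\<bar>?F i\<bar> \<noteq> \<infinity>" if "w i \<noteq> 0" for i
    by (rule Fpt_finite_on_support[OF LD wd fin' that])
  obtain i0 where i0: "i0 \<in> ?X2"
    using X2_ne by blast
  have F_X2: "?F i = ereal (f i0)" if "i \<in> ?X2" for i
  proof -
    have "0 < w i0"
      using i0 bounds by (auto intro: le_less_trans)
    with F_finite[of i0] show ?thesis
      using Fpt_eq_on_free_weights[OF LD opt fin' _ that i0] bounds by (simp add: f_def ereal_real')
  qed
  have balance: "(\<Sum>i\<in>UNIV. w i * f i) = 0"
    unfolding f_def by (rule sum_weights_real_Fpt_eq_0[OF LD wd fin'])
  have "(\<Sum>i\<in>{i. w i = nu i}. ?F i * ereal (nu i)) = ereal (\<Sum>i\<in>{i. w i = nu i}. f i * nu i)"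
    and "(\<Sum>i\<in>{i. w i = mu i}. ?F i * ereal (mu i)) = ereal (\<Sum>i\<in>{i. w i = mu i}. f i * mu i)"
    using sum_ereal_times_real_of_ereal[of "{i. w i = nu i}" nu ?F]
      sum_ereal_times_real_of_ereal[of "{i. w i = mu i}" mu ?F] F_finite
    by (simp_all add: mult.commute f_def)
  with F_X2 free_weights_value[OF bounds w balance i0, of "f i0"]
  show ?thesis
    by (intro exI[of _ "f i0"]) (auto simp: f_def)
qed

end
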